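(* Let $m\geq 2$ and $n\geq 2$ be integers, let $G_m$ be a graph of order $m$ and $K_n$ the complete graph of order $n$. Then $rvcl(G_m\diamond K_n)\geq n+1$.
   Context: All graphs are finite, simple, connected and undirected; $d$ denotes graph distance. A rainbow vertex $k$-coloring of $G$ is a map $c:V(G)\to\{1,\dots,k\}$ such that every two vertices are joined by a path whose internal vertices all receive distinct colors. For such $c$ let $R_i=c^{-1}(i)$; the rainbow code of $v$ is $(d(v,R_1),\dots,d(v,R_k))$ with $d(v,R_i)=\min_{x\in R_i}d(v,x)$. A locating rainbow $k$-coloring is a rainbow vertex $k$-coloring in which distinct vertices have distinct rainbow codes; $rvcl(G)$ is the least $k$ for which one exists. For graphs $G_m$ (order $m$) and $H_n$ (order $n$) on disjoint vertex sets, the edge corona $G_m\diamond H_n$ is obtained from one copy of $G_m$ and $|E(G_m)|$ vertex-disjoint copies of $H_n$, one per edge of $G_m$, by joining both end vertices of the $j$-th edge of $G_m$ to every vertex of the $j$-th copy of $H_n$. *)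

theory Defs
  imports Main
begin

type_synonym 'a graph = "'a set \<times> 'a set set"

definition verts :: "'a graph \<Rightarrow> 'a set" where "verts G = fst G"
definition edges :: "'a graph \<Rightarrow> 'a set set" where "edges G = snd G"

definition simple_graph :: "'a graph \<Rightarrow> bool" where
  "simple_graph G \<longleftrightarrow> finite (verts G) \<and>
     edges G \<subseteq> {{u, v} | u v. u \<in> verts G \<and> v \<in> verts G \<and> u \<noteq> v}"

definition is_walk :: "'a graph \<Rightarrow> 'a list \<Rightarrow> bool" where
  "is_walk G xs \<longleftrightarrow> xs \<noteq> [] \<and> set xs \<subseteq> verts G \<and>
     (\<forall>i < length xs - 1. {xs ! i, xs ! (i + 1)} \<in> edges G)"

definition is_path :: "'a graph \<Rightarrow> 'a list \<Rightarrow> bool" where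
  "is_path G xs \<longleftrightarrow> is_walk G xs \<and> distinct xs"

definition connected_graph :: "'a graph \<Rightarrow> bool" where
  "connected_graph G \<longleftrightarrow> simple_graph G \<and> verts G \<noteq> {} \<and>
     (\<forall>u \<in> verts G. \<forall>v \<in> verts G. \<exists>xs. is_path G xs \<and> hd xs = u \<and> last xs = v)"

definition gdist :: "'a graph \<Rightarrow> 'a \<Rightarrow> 'a \<Rightarrow> nat" where
  "gdist G u v = (LEAST n. \<exists>xs. is_walk G xs \<and> hd xs = u \<and> last xs = v \<and> length xs = n + 1)"

definition set_dist :: "'a graph \<Rightarrow> 'a \<Rightarrow> 'a set \<Rightarrow> nat" where
  "set_dist G v S = (LEAST n. \<exists>x \<in> S. gdist G v x = n)"

definition rainbow_vertex_coloring :: "'a graph \<Rightarrow> nat \<Rightarrow> ('a \<Rightarrow> nat) \<Rightarrow> bool" where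
  "rainbow_vertex_coloring G k c \<longleftrightarrow> c ` verts G \<subseteq> {1..k} \<and>
     (\<forall>u \<in> verts G. \<forall>v \<in> verts G. \<exists>xs. is_path G xs \<and> hd xs = u \<and> last xs = v \<and>
        distinct (map c (butlast (tl xs))))"

definition color_class :: "'a graph \<Rightarrow> ('a \<Rightarrow> nat) \<Rightarrow> nat \<Rightarrow> 'a set" where
  "color_class G c i = {x \<in> verts G. c x = i}"

definition rainbow_code :: "'a graph \<Rightarrow> ('a \<Rightarrow> nat) \<Rightarrow> nat \<Rightarrow> 'a \<Rightarrow> nat list" where
  "rainbow_code G c k v = map (\<lambda>i. set_dist G v (color_class G c i)) [1..<k + 1]"

definition locating_rainbow_coloring :: "'a graph \<Rightarrow> nat \<Rightarrow> ('a \<Rightarrow> nat) \<Rightarrow> bool" where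
  "locating_rainbow_coloring G k c \<longleftrightarrow> rainbow_vertex_coloring G k c \<and>
     c ` verts G = {1..k} \<and> inj_on (rainbow_code G c k) (verts G)"

definition rvcl :: "'a graph \<Rightarrow> nat" where
  "rvcl G = (LEAST k. \<exists>c. locating_rainbow_coloring G k c)"

definition complete_graph :: "'b set \<Rightarrow> 'b graph" where
  "complete_graph V = (V, {{u, v} | u v. u \<in> V \<and> v \<in> V \<and> u \<noteq> v})"

text \<open>Edge corona: vertices Inl v (v in G) and Inr (e, h) (h in the copy of H attached to edge e).\<close>
definition edge_corona :: "'a graph \<Rightarrow> 'b graph \<Rightarrow> ('a + ('a set \<times> 'b)) graph" where
  "edge_corona G H =
    (Inl ` verts G \<union> Inr ` (edges G \<times> verts H),
     (\<lambda>e. Inl ` e) ` edges G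
     \<union> {{Inr (e, h), Inr (e, h')} | e h h'. e \<in> edges G \<and> {h, h'} \<in> edges H}
     \<union> {{Inl u, Inr (e, h)} | u e h. e \<in> edges G \<and> u \<in> e \<and> h \<in> verts H})"

end

theory Submission
  imports Defs "HOL-Combinatorics.Transposition"
begin

(* Two vertices of the same copy of K_n are swapped by an automorphism of the corona that fixes
   every other vertex. If they had the same colour, this automorphism would preserve the colour
   classes and hence the rainbow codes, contradicting the locating property; so each copy of K_n
   sees n distinct colours. If only n colours were used, take an edge e of G with end vertex w:
   the copy attached to e carries every colour, and w has the same rainbow code as the vertex of
   that copy sharing its colour, since both lie in their own colour class and are adjacent,
   through the copy, to a vertex of every other class. Colouring all vertices differently is
   locating, so rvcl is attained and is therefore at least n + 1. *)

lemma is_walk_Nil [simp]: "\<not> is_walk G []"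
  by (simp add: is_walk_def)

lemma is_walk_singleton [simp]: "is_walk G [x] \<longleftrightarrow> x \<in> verts G"
  by (simp add: is_walk_def)

lemma is_walk_Cons_Cons [simp]:
  "is_walk G (x # y # xs) \<longleftrightarrow> x \<in> verts G \<and> {x, y} \<in> edges G \<and> is_walk G (y # xs)"
  by (auto simp: is_walk_def All_less_Suc2)

lemma is_walk_Cons:
  "is_walk G xs \<Longrightarrow> z \<in> verts G \<Longrightarrow> {z, hd xs} \<in> edges G \<Longrightarrow> is_walk G (z # xs)"
  by (cases xs) simp_all

lemma is_walk_snoc:
  "is_walk G xs \<Longrightarrow> z \<in> verts G \<Longrightarrow> {last xs, z} \<in> edges G \<Longrightarrow> is_walk G (xs @ [z])"
  by (induction xs rule: induct_list012) auto

lemma is_path_Cons: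
  "is_path G xs \<Longrightarrow> z \<in> verts G \<Longrightarrow> z \<notin> set xs \<Longrightarrow> {z, hd xs} \<in> edges G \<Longrightarrow>
    is_path G (z # xs)"
  by (simp add: is_path_def is_walk_Cons)

lemma is_path_snoc:
  "is_path G xs \<Longrightarrow> z \<in> verts G \<Longrightarrow> z \<notin> set xs \<Longrightarrow> {last xs, z} \<in> edges G \<Longrightarrow>
    is_path G (xs @ [z])"
  by (simp add: is_path_def is_walk_snoc)

definition graph_hom :: "'a graph \<Rightarrow> 'b graph \<Rightarrow> ('a \<Rightarrow> 'b) \<Rightarrow> bool" where
  "graph_hom G H f \<longleftrightarrow>
     (\<forall>v \<in> verts G. f v \<in> verts H) \<and> (\<forall>a b. {a, b} \<in> edges G \<longrightarrow> {f a, f b} \<in> edges H)"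

lemma is_walk_map: "graph_hom G H f \<Longrightarrow> is_walk G xs \<Longrightarrow> is_walk H (map f xs)"
  by (induction xs rule: induct_list012) (auto simp: graph_hom_def)

lemma is_path_map:
  "graph_hom G H f \<Longrightarrow> inj_on f (verts G) \<Longrightarrow> is_path G xs \<Longrightarrow> is_path H (map f xs)"
  unfolding is_path_def by (metis is_walk_map distinct_map inj_on_subset is_walk_def)

lemma simple_graph_edgeE:
  assumes "simple_graph G" "e \<in> edges G"
  obtains u v where "e = {u, v}" "u \<in> verts G" "v \<in> verts G" "u \<noteq> v"
  using assms by (auto simp: simple_graph_def)

lemma simple_graph_doubleton_edge:
  "simple_graph G \<Longrightarrow> {a, b} \<in> edges G \<Longrightarrow> a \<in> verts G \<and> b \<in> verts G \<and> a \<noteq> b"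
  by (elim simple_graph_edgeE) (auto simp: doubleton_eq_iff)

lemma connected_graph_edges_nonempty:
  assumes conn: "connected_graph G" and card: "2 \<le> card (verts G)"
  shows "edges G \<noteq> {}"
proof -
  have "finite (verts G)" using conn by (simp add: connected_graph_def simple_graph_def)
  then obtain u v where uv: "u \<in> verts G" "v \<in> verts G" "u \<noteq> v"
    using card card_le_Suc0_iff_eq[of "verts G"] by auto
  then obtain xs where xs: "is_path G xs" "hd xs = u" "last xs = v"
    using conn by (auto simp: connected_graph_def)
  then show ?thesis
    using uv(3) by (cases xs rule: remdups_adj.cases) (auto simp: is_path_def)
qed

lemma gdist_self: "a \<in> verts G \<Longrightarrow> gdist G a a = 0"
  unfolding gdist_def by (rule Least_eq_0) (rule exI[of _ "[a]"], simp)

lemma gdist_edge: "{a, b} \<in> edges G \<Longrightarrow> a \<in> verts G \<Longrightarrow> b \<in> verts G \<Longrightarrow> gdist G a b \<le> 1"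
  unfolding gdist_def by (rule Least_le) (rule exI[of _ "[a, b]"], simp)

lemma gdist_eq_0_iff:
  assumes conn: "connected_graph G" and a: "a \<in> verts G" and b: "b \<in> verts G"
  shows "gdist G a b = 0 \<longleftrightarrow> a = b"
proof
  assume dist: "gdist G a b = 0"
  obtain xs where xs: "is_walk G xs" "hd xs = a" "last xs = b"
    using conn a b by (auto simp: connected_graph_def is_path_def)
  then have "\<exists>ys. is_walk G ys \<and> hd ys = a \<and> last ys = b \<and> length ys = (length xs - 1) + 1"
    by (intro exI[of _ xs]) (cases xs, auto)
  then have "\<exists>ys. is_walk G ys \<and> hd ys = a \<and> last ys = b \<and> length ys = gdist G a b + 1"
    unfolding gdist_def by (rule LeastI)
  then obtain y where "hd [y] = a" "last [y] = b"
    using dist by (auto simp: length_Suc_conv)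
  then show "a = b" by simp
qed (use a in \<open>simp add: gdist_self\<close>)

lemma set_dist_le_gdist: "z \<in> S \<Longrightarrow> set_dist G v S \<le> gdist G v z"
  unfolding set_dist_def by (rule Least_le) blast

lemma set_dist_eq_0_iff:
  assumes conn: "connected_graph G" and v: "v \<in> verts G"
    and S: "S \<subseteq> verts G" "S \<noteq> {}"
  shows "set_dist G v S = 0 \<longleftrightarrow> v \<in> S"
proof
  assume dist: "set_dist G v S = 0"
  have "\<exists>x \<in> S. gdist G v x = set_dist G v S"
    unfolding set_dist_def using S(2) by (intro LeastI_ex[where P = "\<lambda>n. \<exists>x \<in> S. gdist G v x = n"]) blast
  then obtain x where "x \<in> S" "gdist G v x = 0" using dist by auto
  moreover from this have "x = v" using gdist_eq_0_iff[OF conn v] S(1) by blast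
  ultimately show "v \<in> S" by simp
next
  assume "v \<in> S"
  then show "set_dist G v S = 0"
    using set_dist_le_gdist[of v S G v] gdist_self[OF v] by simp
qed

lemma set_dist_eq_1:
  assumes conn: "connected_graph G" and a: "a \<in> verts G" and S: "S \<subseteq> verts G" "a \<notin> S"
    and z: "z \<in> S" and az: "{a, z} \<in> edges G"
  shows "set_dist G a S = 1"
proof -
  have "set_dist G a S \<le> 1"
    using set_dist_le_gdist[OF z, of G a] gdist_edge[OF az a] z S(1) by fastforce
  moreover have "set_dist G a S \<noteq> 0"
    using set_dist_eq_0_iff[OF conn a S(1)] S(2) z by blast
  ultimately show ?thesis by simp
qed

lemma color_class_subset [simp]: "color_class G c i \<subseteq> verts G"
  by (auto simp: color_class_def)

lemma rainbow_code_eq_iff: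
  "rainbow_code G c k u = rainbow_code G c k v \<longleftrightarrow>
    (\<forall>i \<in> {1..k}. set_dist G u (color_class G c i) = set_dist G v (color_class G c i))"
  by (auto simp: rainbow_code_def)

lemma gdist_involution:
  assumes hom: "graph_hom G G \<sigma>" and inv: "\<And>z. \<sigma> (\<sigma> z) = z"
  shows "gdist G (\<sigma> a) (\<sigma> b) = gdist G a b"
proof -
  have walk_image: "\<exists>ys. is_walk G ys \<and> hd ys = \<sigma> x \<and> last ys = \<sigma> y \<and> length ys = l"
    if "is_walk G xs" "hd xs = x" "last xs = y" "length xs = l" for xs x y l
  proof -
    have "xs \<noteq> []" using that(1) by auto
    then show ?thesis
      using that is_walk_map[OF hom that(1)] by (intro exI[of _ "map \<sigma> xs"]) (simp add: hd_map last_map)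
  qed
  have "(\<exists>xs. is_walk G xs \<and> hd xs = \<sigma> a \<and> last xs = \<sigma> b \<and> length xs = l) \<longleftrightarrow>
        (\<exists>xs. is_walk G xs \<and> hd xs = a \<and> last xs = b \<and> length xs = l)" for l
    using walk_image[of _ a b l] walk_image[of _ "\<sigma> a" "\<sigma> b" l, unfolded inv] by blast
  then show ?thesis unfolding gdist_def by simp
qed

lemma set_dist_involution:
  "graph_hom G G \<sigma> \<Longrightarrow> (\<And>z. \<sigma> (\<sigma> z) = z) \<Longrightarrow> set_dist G (\<sigma> v) (\<sigma> ` S) = set_dist G v S"
  by (simp add: set_dist_def gdist_involution)

lemma rainbow_code_involution:
  assumes hom: "graph_hom G G \<sigma>" and inv: "\<And>z. \<sigma> (\<sigma> z) = z"
    and col: "\<And>z. z \<in> verts G \<Longrightarrow> c (\<sigma> z) = c z"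
  shows "rainbow_code G c k (\<sigma> v) = rainbow_code G c k v"
proof -
  have "\<sigma> ` color_class G c i = color_class G c i" for i
    using hom col inv unfolding graph_hom_def color_class_def by (auto intro: image_eqI[of _ \<sigma> "\<sigma> _"])
  then show ?thesis
    using set_dist_involution[OF hom inv] by (metis rainbow_code_eq_iff)
qed

lemma locating_rainbow_coloring_involution_fixpoint:
  assumes loc: "locating_rainbow_coloring G k c"
    and hom: "graph_hom G G \<sigma>" and inv: "\<And>z. \<sigma> (\<sigma> z) = z"
    and col: "\<And>z. z \<in> verts G \<Longrightarrow> c (\<sigma> z) = c z"
    and x: "x \<in> verts G"
  shows "\<sigma> x = x"
proof -
  have "inj_on (rainbow_code G c k) (verts G)"
    using loc by (simp add: locating_rainbow_coloring_def)
  moreover have "\<sigma> x \<in> verts G" using hom x by (simp add: graph_hom_def)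
  ultimately show ?thesis
    using rainbow_code_involution[of G \<sigma> c, OF hom inv col] x by (metis inj_onD)
qed

lemma rainbow_code_eq_if_common_neighbours:
  assumes conn: "connected_graph G" and u: "u \<in> verts G" and x: "x \<in> verts G"
    and same_color: "c u = c x"
    and nbrs: "\<And>i. i \<in> {1..k} \<Longrightarrow> i \<noteq> c u \<Longrightarrow>
                 \<exists>z \<in> verts G. c z = i \<and> {u, z} \<in> edges G \<and> {x, z} \<in> edges G"
  shows "rainbow_code G c k u = rainbow_code G c k x"
  unfolding rainbow_code_eq_iff
proof
  fix i assume i: "i \<in> {1..k}"
  show "set_dist G u (color_class G c i) = set_dist G x (color_class G c i)"
  proof (cases "i = c u")
    case True
    then have "u \<in> color_class G c i" "x \<in> color_class G c i"
      using u x same_color by (simp_all add: color_class_def)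
    then show ?thesis
      using set_dist_eq_0_iff[OF conn u] set_dist_eq_0_iff[OF conn x] color_class_subset
      by (metis empty_iff)
  next
    case False
    then obtain z where "z \<in> color_class G c i" "{u, z} \<in> edges G" "{x, z} \<in> edges G"
      using nbrs[OF i] by (auto simp: color_class_def)
    moreover have "u \<notin> color_class G c i" "x \<notin> color_class G c i"
      using False same_color by (auto simp: color_class_def)
    ultimately show ?thesis
      using set_dist_eq_1[OF conn u] set_dist_eq_1[OF conn x] by simp
  qed
qed

lemma connected_graph_has_locating_rainbow_coloring:
  assumes conn: "connected_graph G"
  shows "\<exists>k c. locating_rainbow_coloring G k c"
proof -
  have "finite (verts G)" using conn by (simp add: connected_graph_def simple_graph_def)
  then obtain f where f: "bij_betw f (verts G) {0..<card (verts G)}"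
    using ex_bij_betw_finite_nat by blast
  define c where "c = Suc \<circ> f"
  have "c ` verts G = Suc ` {0..<card (verts G)}"
    by (simp only: c_def image_comp[symmetric] bij_betw_imp_surj_on[OF f])
  then have img: "c ` verts G = {1..card (verts G)}"
    by (simp add: image_Suc_atLeastLessThan atLeastLessThanSuc_atLeastAtMost)
  have inj: "inj_on c (verts G)"
    using f by (simp add: c_def bij_betw_def inj_on_def)
  have "rainbow_vertex_coloring G (card (verts G)) c"
    unfolding rainbow_vertex_coloring_def
  proof (intro conjI ballI)
    fix u v assume "u \<in> verts G" "v \<in> verts G"
    then obtain xs where xs: "is_path G xs" "hd xs = u" "last xs = v"
      using conn by (auto simp: connected_graph_def)
    have "set (butlast (tl xs)) \<subseteq> set xs"
      by (cases xs) (auto dest: in_set_butlastD)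
    then have "set (butlast (tl xs)) \<subseteq> verts G"
      using xs(1) by (auto simp: is_path_def is_walk_def)
    moreover have "distinct (butlast (tl xs))"
      using xs(1) by (simp add: is_path_def distinct_tl distinct_butlast)
    ultimately have "distinct (map c (butlast (tl xs)))"
      using inj by (simp add: distinct_map inj_on_subset)
    then show "\<exists>xs. is_path G xs \<and> hd xs = u \<and> last xs = v \<and> distinct (map c (butlast (tl xs)))"
      using xs by blast
  qed (use img in simp)
  moreover have "inj_on (rainbow_code G c (card (verts G))) (verts G)"
  proof (rule inj_onI)
    fix v w assume v: "v \<in> verts G" and w: "w \<in> verts G"
      and "rainbow_code G c (card (verts G)) v = rainbow_code G c (card (verts G)) w"
    then have "set_dist G v (color_class G c (c v)) = set_dist G w (color_class G c (c v))"
      using img unfolding rainbow_code_eq_iff by blast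
    moreover have "v \<in> color_class G c (c v)" using v by (simp add: color_class_def)
    ultimately have "w \<in> color_class G c (c v)"
      using set_dist_eq_0_iff[OF conn v] set_dist_eq_0_iff[OF conn w] color_class_subset
      by (metis empty_iff)
    then show "v = w" using inj v w by (auto simp: color_class_def inj_on_def)
  qed
  ultimately show ?thesis
    using img by (auto simp: locating_rainbow_coloring_def)
qed

lemma le_rvcl:
  "\<exists>k c. locating_rainbow_coloring G k c \<Longrightarrow>
    (\<And>k c. locating_rainbow_coloring G k c \<Longrightarrow> N \<le> k) \<Longrightarrow> N \<le> rvcl G"
  unfolding rvcl_def by (rule LeastI2_ex) auto

lemma verts_edge_corona: "verts (edge_corona G H) = Inl ` verts G \<union> Inr ` (edges G \<times> verts H)"
  by (simp add: edge_corona_def verts_def)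

lemma edges_edge_corona:
  "edges (edge_corona G H) =
     (\<lambda>e. Inl ` e) ` edges G
     \<union> {{Inr (e, h), Inr (e, h')} | e h h'. e \<in> edges G \<and> {h, h'} \<in> edges H}
     \<union> {{Inl u, Inr (e, h)} | u e h. e \<in> edges G \<and> u \<in> e \<and> h \<in> verts H}"
  by (simp add: edge_corona_def edges_def)

lemma verts_edge_coronaE:
  assumes "z \<in> verts (edge_corona G H)"
  obtains (base) u where "z = Inl u" "u \<in> verts G"
    | (copy) e h where "z = Inr (e, h)" "e \<in> edges G" "h \<in> verts H"
  using assms unfolding verts_edge_corona by blast

lemma edges_edge_coronaE:
  assumes "X \<in> edges (edge_corona G H)"
  obtains (base) e where "X = Inl ` e" "e \<in> edges G"
    | (copy) e h h' where "X = {Inr (e, h), Inr (e, h')}" "e \<in> edges G" "{h, h'} \<in> edges H"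
    | (attach) u e h where "X = {Inl u, Inr (e, h)}" "e \<in> edges G" "u \<in> e" "h \<in> verts H"
  using assms unfolding edges_edge_corona by (elim UnE imageE CollectE exE conjE) metis+

lemma edge_corona_copy_edge:
  "e \<in> edges G \<Longrightarrow> {h, h'} \<in> edges H \<Longrightarrow> {Inr (e, h), Inr (e, h')} \<in> edges (edge_corona G H)"
  unfolding edges_edge_corona by (rule UnI1, rule UnI2, rule CollectI, intro exI conjI) (rule refl | assumption)+

lemma edge_corona_attach_edge:
  "e \<in> edges G \<Longrightarrow> u \<in> e \<Longrightarrow> h \<in> verts H \<Longrightarrow> {Inl u, Inr (e, h)} \<in> edges (edge_corona G H)"
  unfolding edges_edge_corona by (rule UnI2, rule CollectI, intro exI conjI) (rule refl | assumption)+

lemma graph_hom_Inl_edge_corona: "graph_hom G (edge_corona G H) Inl"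
  unfolding graph_hom_def
proof (intro conjI ballI allI impI)
  fix a b assume "{a, b} \<in> edges G"
  then have "Inl ` {a, b} \<in> edges (edge_corona G H)"
    unfolding edges_edge_corona by (intro UnI1 imageI)
  then show "{Inl a, Inl b} \<in> edges (edge_corona G H)" by simp
qed (simp add: verts_edge_corona)

lemma simple_graph_edge_corona:
  assumes sG: "simple_graph G" and sH: "simple_graph H"
  shows "simple_graph (edge_corona G H)"
proof -
  have "edges G \<subseteq> Pow (verts G)" using sG by (auto simp: simple_graph_def)
  then have "finite (edges G)"
    using sG by (auto simp: simple_graph_def intro: finite_subset)
  then have "finite (verts (edge_corona G H))"
    using sG sH by (simp add: simple_graph_def verts_edge_corona)
  moreover have "X \<in> {{a, b} | a b. a \<in> verts (edge_corona G H) \<and> b \<in> verts (edge_corona G H) \<and> a \<noteq> b}"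
    if X: "X \<in> edges (edge_corona G H)" for X
    using X
  proof (cases rule: edges_edge_coronaE)
    case base
    then show ?thesis
      using sG by (elim simple_graph_edgeE) (auto simp: verts_edge_corona)
  next
    case (copy e h h')
    then show ?thesis
      using simple_graph_doubleton_edge[OF sH copy(3)] by (auto simp: verts_edge_corona)
  next
    case attach
    then show ?thesis
      using sG by (elim simple_graph_edgeE) (auto simp: verts_edge_corona)
  qed
  ultimately show ?thesis by (auto simp: simple_graph_def)
qed

lemma connected_graph_edge_corona:
  assumes cG: "connected_graph G" and sH: "simple_graph H"
  shows "connected_graph (edge_corona G H)"
proof -
  let ?C = "edge_corona G H"
  have sG: "simple_graph G" using cG by (simp add: connected_graph_def)
  have path_G: "\<exists>p. is_path G p \<and> hd p = u \<and> last p = v" if "u \<in> verts G" "v \<in> verts G" for u v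
    using cG that by (simp add: connected_graph_def)
  have end_vertex: "\<exists>w \<in> e. w \<in> verts G" if "e \<in> edges G" for e
    using sG that by (elim simple_graph_edgeE) auto
  have inj_Inl: "inj_on Inl (verts G)" by simp
  have from_base: "\<exists>xs. is_path ?C xs \<and> hd xs = Inl u \<and> last xs = b \<and> set (butlast xs) \<subseteq> range Inl"
    if u: "u \<in> verts G" and b: "b \<in> verts ?C" for u b
    using b
  proof (cases rule: verts_edge_coronaE)
    case (base v)
    obtain p where p: "is_path G p" "hd p = u" "last p = v" using path_G[OF u base(2)] by blast
    then have "p \<noteq> []" by (auto simp: is_path_def)
    then show ?thesis
      using p base is_path_map[OF graph_hom_Inl_edge_corona[of G H] inj_Inl p(1)]
      by (intro exI[of _ "map Inl p"]) (auto simp: hd_map last_map map_butlast[symmetric])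
  next
    case (copy e h)
    obtain w where w: "w \<in> e" "w \<in> verts G" using end_vertex[OF copy(2)] by blast
    obtain p where p: "is_path G p" "hd p = u" "last p = w" using path_G[OF u w(2)] by blast
    then have "p \<noteq> []" by (auto simp: is_path_def)
    moreover have "is_path ?C (map Inl p @ [b])"
    proof (rule is_path_snoc)
      show "is_path ?C (map Inl p)" by (rule is_path_map[OF graph_hom_Inl_edge_corona[of G H] inj_Inl p(1)])
      show "{last (map Inl p), b} \<in> edges ?C"
        using \<open>p \<noteq> []\<close> p(3) copy edge_corona_attach_edge[OF copy(2) w(1) copy(3)] by (simp add: last_map)
    qed (use b copy in auto)
    ultimately show ?thesis
      using p by (intro exI[of _ "map Inl p @ [b]"]) (auto simp: hd_map)
  qed
  have "\<exists>xs. is_path ?C xs \<and> hd xs = a \<and> last xs = b" if a: "a \<in> verts ?C" and b: "b \<in> verts ?C" for a b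
    using a
  proof (cases rule: verts_edge_coronaE)
    case (base u)
    then show ?thesis using from_base[OF base(2) b] by blast
  next
    case (copy e h)
    show ?thesis
    proof (cases "a = b")
      case True
      then show ?thesis using a by (intro exI[of _ "[a]"]) (simp add: is_path_def)
    next
      case False
      obtain w where w: "w \<in> e" "w \<in> verts G" using end_vertex[OF copy(2)] by blast
      obtain xs where xs: "is_path ?C xs" "hd xs = Inl w" "last xs = b" "set (butlast xs) \<subseteq> range Inl"
        using from_base[OF w(2) b] by blast
      have "xs \<noteq> []" using xs(1) by (auto simp: is_path_def)
      then have "set xs = insert b (set (butlast xs))"
        using xs(3) by (cases xs rule: rev_cases) auto
      then have "a \<notin> set xs" using False copy(1) xs(4) by auto
      then have "is_path ?C (a # xs)"
        using is_path_Cons[OF xs(1) a] xs(2) edge_corona_attach_edge[OF copy(2) w(1) copy(3)] copy(1)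
        by (simp add: insert_commute)
      then show ?thesis using xs(3) \<open>xs \<noteq> []\<close> by (intro exI[of _ "a # xs"]) simp
    qed
  qed
  moreover have "verts ?C \<noteq> {}"
    using cG by (auto simp: connected_graph_def verts_edge_corona)
  ultimately show ?thesis
    using simple_graph_edge_corona[OF sG sH] by (simp add: connected_graph_def)
qed

definition corona_copy_map :: "'a set \<Rightarrow> ('b \<Rightarrow> 'b) \<Rightarrow> 'a + 'a set \<times> 'b \<Rightarrow> 'a + 'a set \<times> 'b" where
  "corona_copy_map e \<sigma> z =
     (case z of Inl u \<Rightarrow> Inl u | Inr (e', h) \<Rightarrow> Inr (e', if e' = e then \<sigma> h else h))"

lemma corona_copy_map_Inl [simp]: "corona_copy_map e \<sigma> (Inl u) = Inl u"
  by (simp add: corona_copy_map_def)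

lemma corona_copy_map_Inr [simp]:
  "corona_copy_map e \<sigma> (Inr (e', h)) = Inr (e', if e' = e then \<sigma> h else h)"
  by (simp add: corona_copy_map_def)

lemma corona_copy_map_involution:
  "(\<And>h. \<sigma> (\<sigma> h) = h) \<Longrightarrow> corona_copy_map e \<sigma> (corona_copy_map e \<sigma> z) = z"
  by (cases z) auto

lemma graph_hom_corona_copy_map:
  assumes hom: "graph_hom H H \<sigma>"
  shows "graph_hom (edge_corona G H) (edge_corona G H) (corona_copy_map e \<sigma>)"
proof -
  let ?f = "corona_copy_map e \<sigma>"
  define \<tau> where "\<tau> e' = (if e' = e then \<sigma> else id)" for e'
  have \<tau>_hom: "graph_hom H H (\<tau> e')" for e'
    using hom by (simp add: \<tau>_def graph_hom_def)
  have f_Inr: "?f (Inr (e', h)) = Inr (e', \<tau> e' h)" for e' h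
    by (simp add: \<tau>_def)
  have edge: "?f ` X \<in> edges (edge_corona G H)" if X: "X \<in> edges (edge_corona G H)" for X
    using X
  proof (cases rule: edges_edge_coronaE)
    case base
    then have "?f ` X = X" by (auto simp: image_image)
    then show ?thesis using X by simp
  next
    case (copy e' h h')
    then have "{\<tau> e' h, \<tau> e' h'} \<in> edges H" using \<tau>_hom by (simp add: graph_hom_def)
    then show ?thesis using copy(1,2) f_Inr by (simp add: edge_corona_copy_edge)
  next
    case (attach u e' h)
    then have "\<tau> e' h \<in> verts H" using \<tau>_hom by (simp add: graph_hom_def)
    then show ?thesis using attach(1-3) f_Inr by (simp add: edge_corona_attach_edge)
  qed
  have vert: "?f z \<in> verts (edge_corona G H)" if z: "z \<in> verts (edge_corona G H)" for z
    using z
  proof (cases rule: verts_edge_coronaE)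
    case (copy e' h)
    then have "\<tau> e' h \<in> verts H" using \<tau>_hom by (simp add: graph_hom_def)
    then show ?thesis using copy f_Inr by (simp add: verts_edge_corona)
  qed (use z in simp)
  show ?thesis
    unfolding graph_hom_def using vert edge[of "{_, _}"] by simp
qed

lemma verts_complete_graph [simp]: "verts (complete_graph V) = V"
  by (simp add: complete_graph_def verts_def)

lemma doubleton_in_edges_complete_graph [simp]:
  "{a, b} \<in> edges (complete_graph V) \<longleftrightarrow> a \<in> V \<and> b \<in> V \<and> a \<noteq> b"
  by (auto simp: complete_graph_def edges_def doubleton_eq_iff)

lemma simple_graph_complete_graph: "finite V \<Longrightarrow> simple_graph (complete_graph V)"
  by (auto simp: simple_graph_def complete_graph_def verts_def edges_def)

lemma graph_hom_complete_graph_transpose: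
  "h \<in> V \<Longrightarrow> h' \<in> V \<Longrightarrow> graph_hom (complete_graph V) (complete_graph V) (transpose h h')"
  by (auto simp: graph_hom_def transpose_def)

lemma inj_on_edge_corona_complete_copy_colors:
  assumes loc: "locating_rainbow_coloring (edge_corona G (complete_graph V)) k c"
    and e: "e \<in> edges G"
  shows "inj_on (\<lambda>h. c (Inr (e, h))) V"
proof (rule inj_onI)
  fix h h' assume h: "h \<in> V" "h' \<in> V" and same: "c (Inr (e, h)) = c (Inr (e, h'))"
  let ?\<sigma> = "corona_copy_map e (transpose h h')"
  have "?\<sigma> (Inr (e, h)) = Inr (e, h)"
  proof (rule locating_rainbow_coloring_involution_fixpoint[OF loc])
    show "graph_hom (edge_corona G (complete_graph V)) (edge_corona G (complete_graph V)) ?\<sigma>"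
      by (rule graph_hom_corona_copy_map[OF graph_hom_complete_graph_transpose[OF h]])
    show "?\<sigma> (?\<sigma> z) = z" for z
      by (rule corona_copy_map_involution) simp
    show "c (?\<sigma> z) = c z" for z
    proof (cases z)
      case (Inr p)
      then show ?thesis using same by (cases p) (auto simp: transpose_def)
    qed simp
    show "Inr (e, h) \<in> verts (edge_corona G (complete_graph V))"
      using e h by (simp add: verts_edge_corona)
  qed
  then show "h = h'" by simp
qed

lemma edge_corona_complete_copy_not_all_colors:
  assumes conn: "connected_graph G" and fin: "finite V"
    and loc: "locating_rainbow_coloring (edge_corona G (complete_graph V)) k c"
    and e: "e \<in> edges G" and w: "w \<in> e"
  shows "(\<lambda>h. c (Inr (e, h))) ` V \<noteq> {1..k}"
proof
  let ?C = "edge_corona G (complete_graph V)"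
  assume all_colors: "(\<lambda>h. c (Inr (e, h))) ` V = {1..k}"
  have conn_C: "connected_graph ?C"
    using connected_graph_edge_corona[OF conn simple_graph_complete_graph[OF fin]] .
  have "w \<in> verts G"
    using conn e w by (auto simp: connected_graph_def elim: simple_graph_edgeE)
  then have u: "Inl w \<in> verts ?C" by (simp add: verts_edge_corona)
  then have "c (Inl w) \<in> (\<lambda>h. c (Inr (e, h))) ` V"
    using loc all_colors by (auto simp: locating_rainbow_coloring_def)
  then obtain h0 where h0: "h0 \<in> V" "c (Inl w) = c (Inr (e, h0))" by blast
  have x: "Inr (e, h0) \<in> verts ?C" using e h0(1) by (simp add: verts_edge_corona)
  have "rainbow_code ?C c k (Inl w) = rainbow_code ?C c k (Inr (e, h0))"
  proof (rule rainbow_code_eq_if_common_neighbours[OF conn_C u x h0(2)])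
    fix i assume i: "i \<in> {1..k}" "i \<noteq> c (Inl w)"
    then have "i \<in> (\<lambda>h. c (Inr (e, h))) ` V" using all_colors by simp
    then obtain h where h: "h \<in> V" "c (Inr (e, h)) = i" by blast
    then have "h \<noteq> h0" using h0(2) i(2) by auto
    then show "\<exists>z \<in> verts ?C. c z = i \<and> {Inl w, z} \<in> edges ?C \<and> {Inr (e, h0), z} \<in> edges ?C"
      using e w h h0(1)
      by (intro bexI[of _ "Inr (e, h)"]) (auto simp: verts_edge_corona edge_corona_attach_edge edge_corona_copy_edge)
  qed
  moreover have "inj_on (rainbow_code ?C c k) (verts ?C)"
    using loc by (simp add: locating_rainbow_coloring_def)
  ultimately show False using u x by (auto dest: inj_onD)
qed

lemma edge_corona_complete_locating_card_less:
  assumes conn: "connected_graph G" and fin: "finite V" and edges: "edges G \<noteq> {}"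
    and loc: "locating_rainbow_coloring (edge_corona G (complete_graph V)) k c"
  shows "card V < k"
proof -
  obtain e where e: "e \<in> edges G" using edges by blast
  moreover have "simple_graph G" using conn by (simp add: connected_graph_def)
  ultimately obtain u v where "e = {u, v}" by (elim simple_graph_edgeE)
  then have u: "u \<in> e" by simp
  let ?f = "\<lambda>h. c (Inr (e, h))"
  have "?f ` V \<subseteq> {1..k}"
    using loc e by (auto simp: locating_rainbow_coloring_def verts_edge_corona)
  then have "?f ` V \<subset> {1..k}"
    using edge_corona_complete_copy_not_all_colors[OF conn fin loc e u] by blast
  then have "card (?f ` V) < card {1..k}"
    by (rule psubset_card_mono[OF finite_atLeastAtMost])
  then show ?thesis
    using card_image[OF inj_on_edge_corona_complete_copy_colors[OF loc e]] by simp
qed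

theorem lemma4:
  fixes G :: "'a graph" and V :: "'b set" and m n :: nat
  assumes "m \<ge> 2" and "n \<ge> 2"
    and "connected_graph G" and "card (verts G) = m"
    and "finite V" and "card V = n"
  shows "rvcl (edge_corona G (complete_graph V)) \<ge> n + 1"
proof -
  let ?C = "edge_corona G (complete_graph V)"
  have edges: "edges G \<noteq> {}"
    using connected_graph_edges_nonempty[OF assms(3)] assms(1,4) by simp
  have "connected_graph ?C"
    using connected_graph_edge_corona[OF assms(3) simple_graph_complete_graph[OF assms(5)]] .
  then have "\<exists>k c. locating_rainbow_coloring ?C k c"
    by (rule connected_graph_has_locating_rainbow_coloring)
  then show ?thesis
    using edge_corona_complete_locating_card_less[OF assms(3,5) edges] assms(6)
    by (intro le_rvcl) (auto simp: Suc_le_eq)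
qed

end
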